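(* Let $H=(V_H,E_H)$ be a graph on $n$ vertices with vertex weights $c:V_H\to[0,1]$, $y\mapsto c_y$. Let $T\subseteq V_H$ with $|T|=n'=n/2$, let $k\le n'/12$ be an integer, and let $S$ be a uniformly random subset of $T$ of size $k$. Then $$\Pr\Big\{\forall x\in V_H:\ \sum_{\substack{(x,y)\in E_H\\ y\in S}}c_y\le\frac{4k}{n'}\sum_{\substack{(x,y)\in E_H\\ y\in V_H\setminus S}}c_y+2\log n\Big\}\ \ge\ 1-o(1),$$ where $o(1)\to0$ as $n\to\infty$. *)

theory Defs
  imports "HOL-Probability.Probability"
begin

definition simple_graph :: "'a set \<Rightarrow> ('a \<times> 'a) set \<Rightarrow> bool" where
  "simple_graph V E \<longleftrightarrow> finite V \<and> E \<subseteq> V \<times> V \<and> sym E \<and> irrefl E"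

end

theory Submission
  imports Defs "HOL-Real_Asymp.Real_Asymp"
begin

text \<open>
  Fix a vertex \<open>x\<close> and let \<open>X\<close> be the weight of its neighbours in the random set \<open>S\<close>,
  \<open>W\<close> the weight of all its neighbours in \<open>T\<close>, and \<open>p = k / |T| \<le> 1/12\<close>. If \<open>x\<close> violates the
  inequality with slack \<open>2 L\<close>, then, since the neighbours in \<open>T - S\<close> weigh at least \<open>W - X\<close>,
  one gets \<open>X \<ge> 3 p W + 3/2 L\<close>. A uniform \<open>k\<close>-subset contains a fixed \<open>j\<close>-set with probability
  at most \<open>p^j\<close>, so expanding \<open>exp X = \<Prod>(1 + (e^c - 1))\<close> gives \<open>E[exp X] \<le> exp (2 p W)\<close>;
  Markov's inequality bounds the failure probability at \<open>x\<close> by \<open>exp (-3/2 L)\<close>. With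
  \<open>L = ln n\<close>, a union bound over the \<open>n\<close> vertices gives failure probability \<open>\<le> n^(-1/2)\<close>.
\<close>

lemma choose_diff_mult_power_le:
  "j \<le> k \<Longrightarrow> k \<le> N \<Longrightarrow>
   real ((N - j) choose (k - j)) * real N ^ j \<le> real k ^ j * real (N choose k)"
proof (induction j)
  case 0
  then show ?case by simp
next
  case (Suc j)
  have IH: "real ((N - j) choose (k - j)) * real N ^ j \<le> real k ^ j * real (N choose k)"
    using Suc by simp
  have Nj: "real (N - j) > 0" using Suc.prems by simp
  have "(k - j) * ((N - j) choose (k - j)) = (N - j) * ((N - j - 1) choose (k - j - 1))"
    using times_binomial_minus1_eq[of "k - j" "N - j"] Suc.prems by simp
  then have "real (k - j) * real ((N - j) choose (k - j))
           = real (N - j) * real ((N - Suc j) choose (k - Suc j))"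
    unfolding diff_Suc_eq_diff_pred diff_commute[of _ 1] of_nat_mult[symmetric] by (simp only:)
  then have step: "real ((N - Suc j) choose (k - Suc j))
                 = real (k - j) / real (N - j) * real ((N - j) choose (k - j))"
    using Nj by (simp add: field_simps)
  have "real j * real k \<le> real N * real j"
    using Suc.prems by (metis mult.commute mult_left_mono of_nat_0_le_iff of_nat_le_iff)
  then have "real (k - j) * real N \<le> real k * real (N - j)"
    using Suc.prems by (simp add: of_nat_diff algebra_simps)
  then have ratio: "real (k - j) * real N / real (N - j) \<le> real k"
    using Nj by (simp add: field_simps)
  have "real ((N - Suc j) choose (k - Suc j)) * real N ^ Suc j
      = (real (k - j) * real N / real (N - j)) * (real ((N - j) choose (k - j)) * real N ^ j)"
    by (simp add: step field_simps)
  also have "\<dots> \<le> (real (k - j) * real N / real (N - j)) * (real k ^ j * real (N choose k))"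
    by (rule mult_left_mono[OF IH]) (use Nj in simp)
  also have "\<dots> \<le> real k * (real k ^ j * real (N choose k))"
    by (rule mult_right_mono[OF ratio]) simp
  finally show ?case by simp
qed

lemma card_k_subsets_containing_le:
  assumes T: "finite T" and J: "J \<subseteq> T" and k: "k \<le> card T"
  shows "real (card {S. S \<subseteq> T \<and> card S = k \<and> J \<subseteq> S}) * real (card T) ^ card J
         \<le> real k ^ card J * real (card T choose k)"
proof (cases "card J \<le> k")
  case False
  have empty: "{S. S \<subseteq> T \<and> card S = k \<and> J \<subseteq> S} = {}"
    using False T by (auto dest: card_mono[OF rev_finite_subset])
  show ?thesis unfolding empty by simp
next
  case True
  let ?A = "{S. S \<subseteq> T \<and> card S = k \<and> J \<subseteq> S}"
  let ?B = "{S'. S' \<subseteq> T - J \<and> card S' = k - card J}"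
  have fJ: "finite J" using T J finite_subset by blast
  have "inj_on (\<lambda>S. S - J) ?A" by (rule inj_onI) blast
  moreover have "(\<lambda>S. S - J) ` ?A \<subseteq> ?B"
    using card_Diff_subset[OF fJ] by auto
  ultimately have "card ?A \<le> card ?B"
    using T by (intro card_inj_on_le) auto
  also have "card ?B = (card T - card J) choose (k - card J)"
    using n_subsets[of "T - J"] T card_Diff_subset[OF fJ J] by simp
  finally have "real (card ?A) * real (card T) ^ card J
      \<le> real ((card T - card J) choose (k - card J)) * real (card T) ^ card J"
    by (intro mult_right_mono) simp_all
  also have "\<dots> \<le> real k ^ card J * real (card T choose k)"
    by (rule choose_diff_mult_power_le[OF True k])
  finally show ?thesis .
qed

text \<open>Expand both products over subsets \<open>J\<close> of \<open>N\<close> and count the \<open>k\<close>-subsets containing \<open>J\<close>.\<close>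

lemma sum_prod_k_subsets_le:
  fixes b :: "'a \<Rightarrow> real"
  assumes T: "finite T" and N: "N \<subseteq> T" and k: "k \<le> card T" and T0: "card T > 0"
    and b: "\<And>y. y \<in> N \<Longrightarrow> 0 \<le> b y"
  shows "(\<Sum>S\<in>{S. S \<subseteq> T \<and> card S = k}. \<Prod>y\<in>S \<inter> N. 1 + b y)
         \<le> real (card {S. S \<subseteq> T \<and> card S = k}) * (\<Prod>y\<in>N. 1 + real k / real (card T) * b y)"
proof -
  let ?U = "{S. S \<subseteq> T \<and> card S = k}"
  let ?U\<^sub>J = "\<lambda>J. {S. S \<subseteq> T \<and> card S = k \<and> J \<subseteq> S}"
  define p where "p = real k / real (card T)"
  have fN: "finite N" using T N finite_subset by blast
  have fU: "finite ?U" by (rule finite_subset[of _ "Pow T"]) (use T in auto)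
  have cU: "card ?U = card T choose k" using n_subsets[OF T] by simp
  have "(\<Sum>S\<in>?U. \<Prod>y\<in>S \<inter> N. 1 + b y) = (\<Sum>S\<in>?U. \<Sum>J\<in>Pow (S \<inter> N). \<Prod>y\<in>J. b y)"
    by (rule sum.cong[OF refl]) (use fN in \<open>simp add: prod_add add.commute[of 1]\<close>)
  also have "\<dots> = (\<Sum>S\<in>?U. \<Sum>J\<in>Pow N. if J \<subseteq> S then \<Prod>y\<in>J. b y else 0)"
  proof (rule sum.cong[OF refl])
    fix S
    have "Pow (S \<inter> N) = {J \<in> Pow N. J \<subseteq> S}" by auto
    then show "(\<Sum>J\<in>Pow (S \<inter> N). \<Prod>y\<in>J. b y) = (\<Sum>J\<in>Pow N. if J \<subseteq> S then \<Prod>y\<in>J. b y else 0)"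
      using fN by (simp only: sum.inter_filter[symmetric] finite_Pow_iff)
  qed
  also have "\<dots> = (\<Sum>J\<in>Pow N. (\<Prod>y\<in>J. b y) * real (card (?U\<^sub>J J)))"
  proof (subst sum.swap, rule sum.cong[OF refl])
    fix J
    have "{S \<in> ?U. J \<subseteq> S} = ?U\<^sub>J J" by auto
    then show "(\<Sum>S\<in>?U. if J \<subseteq> S then \<Prod>y\<in>J. b y else 0) = (\<Prod>y\<in>J. b y) * real (card (?U\<^sub>J J))"
      using fU by (simp add: sum.inter_filter[symmetric])
  qed
  also have "\<dots> \<le> (\<Sum>J\<in>Pow N. (\<Prod>y\<in>J. b y) * (p ^ card J * real (card ?U)))"
  proof (intro sum_mono mult_left_mono)
    fix J assume J: "J \<in> Pow N"
    then show "0 \<le> (\<Prod>y\<in>J. b y)" using b by (auto intro: prod_nonneg)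
    have "real (card (?U\<^sub>J J)) * real (card T) ^ card J \<le> real k ^ card J * real (card T choose k)"
      using card_k_subsets_containing_le[OF T _ k, of J] J N by auto
    then show "real (card (?U\<^sub>J J)) \<le> p ^ card J * real (card ?U)"
      using T0 by (simp add: p_def cU power_divide field_simps)
  qed
  also have "\<dots> = real (card ?U) * (\<Sum>J\<in>Pow N. \<Prod>y\<in>J. p * b y)"
    by (simp add: prod.distrib sum_distrib_right mult_ac)
  also have "(\<Sum>J\<in>Pow N. \<Prod>y\<in>J. p * b y) = (\<Prod>y\<in>N. 1 + p * b y)"
    using fN by (simp add: prod_add add.commute[of 1])
  finally show ?thesis by (simp add: p_def)
qed

lemma sum_exp_k_subsets_le:
  fixes c :: "'a \<Rightarrow> real"
  assumes T: "finite T" and N: "N \<subseteq> T" and k: "k \<le> card T" and T0: "card T > 0"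
    and c: "\<And>y. y \<in> N \<Longrightarrow> 0 \<le> c y \<and> c y \<le> 1"
  shows "(\<Sum>S\<in>{S. S \<subseteq> T \<and> card S = k}. exp (\<Sum>y\<in>S \<inter> N. c y))
         \<le> real (card {S. S \<subseteq> T \<and> card S = k}) * exp (2 * (real k / real (card T)) * (\<Sum>y\<in>N. c y))"
proof -
  let ?U = "{S. S \<subseteq> T \<and> card S = k}"
  define p where "p = real k / real (card T)"
  define b where "b y = exp (c y) - 1" for y
  have fN: "finite N" using T N finite_subset by blast
  have p0: "0 \<le> p" by (simp add: p_def)
  have b0: "0 \<le> b y" if "y \<in> N" for y using c[OF that] by (simp add: b_def)
  have b2: "b y \<le> 2 * c y" if "y \<in> N" for y
  proof -
    have "exp (c y) \<le> 1 + c y + (c y)\<^sup>2" using c[OF that] by (intro exp_bound) auto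
    moreover have "(c y)\<^sup>2 \<le> c y" using c[OF that] by (simp add: power2_eq_square mult_left_le)
    ultimately show ?thesis by (simp add: b_def)
  qed
  have "(\<Sum>S\<in>?U. exp (\<Sum>y\<in>S \<inter> N. c y)) = (\<Sum>S\<in>?U. \<Prod>y\<in>S \<inter> N. 1 + b y)"
    using fN by (simp add: exp_sum b_def)
  also have "\<dots> \<le> real (card ?U) * (\<Prod>y\<in>N. 1 + p * b y)"
    using sum_prod_k_subsets_le[OF T N k T0 b0] by (simp add: p_def)
  also have "(\<Prod>y\<in>N. 1 + p * b y) \<le> (\<Prod>y\<in>N. exp (2 * p * c y))"
  proof (rule prod_mono)
    fix y assume y: "y \<in> N"
    have "0 \<le> p * b y" using p0 b0[OF y] by simp
    moreover have "1 + p * b y \<le> exp (p * b y)" by simp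
    moreover have "p * b y \<le> 2 * p * c y" using mult_left_mono[OF b2[OF y] p0] by simp
    ultimately show "0 \<le> 1 + p * b y \<and> 1 + p * b y \<le> exp (2 * p * c y)"
      by (meson add_nonneg_nonneg exp_le_cancel_iff order_trans zero_le_one)
  qed
  also have "(\<Prod>y\<in>N. exp (2 * p * c y)) = exp (2 * p * (\<Sum>y\<in>N. c y))"
    using fN by (simp add: exp_sum sum_distrib_left)
  finally show ?thesis by (simp add: p_def mult_left_mono)
qed

lemma card_k_subsets_sum_ge_le:
  fixes c :: "'a \<Rightarrow> real"
  assumes T: "finite T" and N: "N \<subseteq> T" and k: "k \<le> card T" and T0: "card T > 0"
    and c: "\<And>y. y \<in> N \<Longrightarrow> 0 \<le> c y \<and> c y \<le> 1"
  shows "real (card {S. S \<subseteq> T \<and> card S = k \<and> a \<le> (\<Sum>y\<in>S \<inter> N. c y)})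
         \<le> real (card {S. S \<subseteq> T \<and> card S = k})
           * exp (2 * (real k / real (card T)) * (\<Sum>y\<in>N. c y) - a)"
proof -
  let ?U = "{S. S \<subseteq> T \<and> card S = k}"
  let ?A = "{S. S \<subseteq> T \<and> card S = k \<and> a \<le> (\<Sum>y\<in>S \<inter> N. c y)}"
  have fU: "finite ?U" by (rule finite_subset[of _ "Pow T"]) (use T in auto)
  have "real (card ?A) * exp a = (\<Sum>S\<in>?A. exp a)" by simp
  also have "\<dots> \<le> (\<Sum>S\<in>?A. exp (\<Sum>y\<in>S \<inter> N. c y))" by (intro sum_mono) simp
  also have "\<dots> \<le> (\<Sum>S\<in>?U. exp (\<Sum>y\<in>S \<inter> N. c y))" using fU by (intro sum_mono2) auto
  also have "\<dots> \<le> real (card ?U) * exp (2 * (real k / real (card T)) * (\<Sum>y\<in>N. c y))"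
    by (rule sum_exp_k_subsets_le[OF T N k T0 c])
  finally show ?thesis by (simp add: exp_diff field_simps)
qed

lemma card_k_subsets_violating_le:
  fixes c :: "'a \<Rightarrow> real"
  assumes V: "finite V" and c: "\<forall>y\<in>V. 0 \<le> c y \<and> c y \<le> 1"
    and TV: "T \<subseteq> V" and kT: "real k \<le> real (card T) / 12" and T0: "card T > 0"
    and L0: "0 \<le> L"
  shows "real (card {S \<in> {S. S \<subseteq> T \<and> card S = k}. \<not> ((\<Sum>y\<in>{y\<in>S. (x, y) \<in> E}. c y)
                 \<le> 4 * real k / real (card T) * (\<Sum>y\<in>{y\<in>V - S. (x, y) \<in> E}. c y) + 2 * L)})
         \<le> real (card {S. S \<subseteq> T \<and> card S = k}) * exp (-(3/2) * L)"
proof -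
  let ?U = "{S. S \<subseteq> T \<and> card S = k}"
  define p where "p = real k / real (card T)"
  define N where "N = {y\<in>T. (x, y) \<in> E}"
  define W where "W = (\<Sum>y\<in>N. c y)"
  have fT: "finite T" using V TV finite_subset by blast
  have NT: "N \<subseteq> T" by (auto simp: N_def)
  have fN: "finite N" using fT NT finite_subset by blast
  have kN: "k \<le> card T" using kT by simp
  have cN: "\<And>y. y \<in> N \<Longrightarrow> 0 \<le> c y \<and> c y \<le> 1" using c TV NT by auto
  have p0: "0 \<le> p" and p12: "p \<le> 1/12" using kT T0 by (auto simp: p_def field_simps)
  have W0: "0 \<le> W" unfolding W_def using cN by (auto intro: sum_nonneg)
  have large: "3 * p * W + 3/2 * L \<le> (\<Sum>y\<in>S \<inter> N. c y)"
    if ST: "S \<subseteq> T" and fail: "\<not> ((\<Sum>y\<in>{y\<in>S. (x, y) \<in> E}. c y)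
                 \<le> 4 * p * (\<Sum>y\<in>{y\<in>V - S. (x, y) \<in> E}. c y) + 2 * L)" for S
  proof -
    define X where "X = (\<Sum>y\<in>S \<inter> N. c y)"
    let ?R = "\<Sum>y\<in>{y\<in>V - S. (x, y) \<in> E}. c y"
    have "{y\<in>S. (x, y) \<in> E} = S \<inter> N" using ST by (auto simp: N_def)
    then have X: "X > 4 * p * ?R + 2 * L" using fail by (simp add: X_def)
    have X0: "0 \<le> X" unfolding X_def using cN by (auto intro: sum_nonneg)
    have "W - X = (\<Sum>y\<in>N - (S \<inter> N). c y)"
      using sum_diff[of N "S \<inter> N" c] fN by (simp add: W_def X_def)
    also have "\<dots> = (\<Sum>y\<in>N - S. c y)"
      by (intro sum.cong) auto
    also have "\<dots> \<le> ?R"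
      using V TV c by (intro sum_mono2) (auto simp: N_def)
    finally have "4 * p * (W - X) \<le> 4 * p * ?R" using p0 by (simp add: mult_left_mono)
    moreover have "4 * p * X \<le> X / 3" using mult_right_mono[OF p12 X0] by simp
    ultimately show ?thesis using X by (simp add: X_def algebra_simps)
  qed
  have "real (card {S \<in> ?U. \<not> ((\<Sum>y\<in>{y\<in>S. (x, y) \<in> E}. c y)
                 \<le> 4 * real k / real (card T) * (\<Sum>y\<in>{y\<in>V - S. (x, y) \<in> E}. c y) + 2 * L)})
      \<le> real (card {S. S \<subseteq> T \<and> card S = k \<and> 3 * p * W + 3/2 * L \<le> (\<Sum>y\<in>S \<inter> N. c y)})"
    using fT large by (intro of_nat_mono card_mono) (auto simp: p_def)
  also have "\<dots> \<le> real (card ?U) * exp (2 * p * W - (3 * p * W + 3/2 * L))"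
    unfolding p_def W_def by (rule card_k_subsets_sum_ge_le[OF fT NT kN T0 cN])
  also have "\<dots> \<le> real (card ?U) * exp (-(3/2) * L)"
    using p0 W0 by (intro mult_left_mono) auto
  finally show ?thesis .
qed

lemma prob_pmf_of_set_Ball_ge:
  assumes U: "finite U" "U \<noteq> {}" and V: "finite V"
    and bad: "\<And>x. x \<in> V \<Longrightarrow> real (card {S \<in> U. \<not> P x S}) \<le> real (card U) * q"
  shows "measure_pmf.prob (pmf_of_set U) {S. \<forall>x\<in>V. P x S} \<ge> 1 - real (card V) * q"
proof -
  let ?Ev = "{S. \<forall>x\<in>V. P x S}"
  let ?Bad = "\<lambda>x. {S \<in> U. \<not> P x S}"
  have "U \<subseteq> (U \<inter> ?Ev) \<union> (\<Union>x\<in>V. ?Bad x)" by auto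
  then have "card U \<le> card ((U \<inter> ?Ev) \<union> (\<Union>x\<in>V. ?Bad x))"
    using U V by (intro card_mono) auto
  also have "\<dots> \<le> card (U \<inter> ?Ev) + card (\<Union>x\<in>V. ?Bad x)"
    by (rule card_Un_le)
  also have "card (\<Union>x\<in>V. ?Bad x) \<le> (\<Sum>x\<in>V. card (?Bad x))"
    by (rule card_UN_le[OF V])
  finally have "real (card U) \<le> real (card (U \<inter> ?Ev)) + (\<Sum>x\<in>V. real (card (?Bad x)))"
    by (simp flip: of_nat_sum of_nat_add)
  also have "\<dots> \<le> real (card (U \<inter> ?Ev)) + real (card V) * (real (card U) * q)"
    using sum_mono[of V "\<lambda>x. real (card (?Bad x))" "\<lambda>_. real (card U) * q"] bad by simp
  finally have "1 - real (card V) * q \<le> real (card (U \<inter> ?Ev)) / real (card U)"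
    using U by (simp add: field_simps card_gt_0_iff)
  also have "\<dots> = measure_pmf.prob (pmf_of_set U) ?Ev"
    using U by (simp add: measure_pmf_of_set)
  finally show ?thesis .
qed

theorem lemma11:
  "\<exists>f :: nat \<Rightarrow> real. f \<longlonglongrightarrow> 0 \<and>
     (\<forall>n (V :: nat set) E (c :: nat \<Rightarrow> real) T (k :: nat).
        simple_graph V E \<and> card V = n \<and>
        (\<forall>y\<in>V. 0 \<le> c y \<and> c y \<le> 1) \<and>
        T \<subseteq> V \<and> 2 * card T = n \<and> real k \<le> real (card T) / 12 \<longrightarrow>
        measure_pmf.prob (pmf_of_set {S. S \<subseteq> T \<and> card S = k})
          {S. \<forall>x\<in>V. (\<Sum>y\<in>{y\<in>S. (x, y) \<in> E}. c y)
                 \<le> 4 * real k / real (card T) * (\<Sum>y\<in>{y\<in>V - S. (x, y) \<in> E}. c y)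
                   + 2 * ln (real n)}
        \<ge> 1 - f n)"
proof (intro exI conjI allI impI)
  define f where "f n = (if n \<le> 1 then 1 else real n * exp (-(3/2) * ln (real n)))" for n :: nat
  show "f \<longlonglongrightarrow> 0"
  proof (rule Lim_transform_eventually)
    show "(\<lambda>n::nat. real n * exp (-(3/2) * ln (real n))) \<longlonglongrightarrow> 0" by real_asymp
    show "\<forall>\<^sub>F n in sequentially. real n * exp (-(3/2) * ln (real n)) = f n"
      using eventually_ge_at_top[of "2::nat"] by eventually_elim (simp add: f_def)
  qed
  fix n V E and c :: "nat \<Rightarrow> real" and T k
  assume A: "simple_graph V E \<and> card V = n \<and> (\<forall>y\<in>V. 0 \<le> c y \<and> c y \<le> 1) \<and>
        T \<subseteq> V \<and> 2 * card T = n \<and> real k \<le> real (card T) / 12"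
  let ?U = "{S. S \<subseteq> T \<and> card S = k}"
  show "measure_pmf.prob (pmf_of_set ?U) {S. \<forall>x\<in>V. (\<Sum>y\<in>{y\<in>S. (x, y) \<in> E}. c y)
          \<le> 4 * real k / real (card T) * (\<Sum>y\<in>{y\<in>V - S. (x, y) \<in> E}. c y) + 2 * ln (real n)}
        \<ge> 1 - f n"
  proof (cases "n \<le> 1")
    case True
    then show ?thesis by (simp add: f_def)
  next
    case False
    have c: "\<forall>y\<in>V. 0 \<le> c y \<and> c y \<le> 1" and TV: "T \<subseteq> V"
      and kT: "real k \<le> real (card T) / 12" and L: "0 \<le> ln (real n)"
      using A False by auto
    have V: "finite V" and T: "finite T" and T0: "card T > 0"
      using A False finite_subset by (auto simp: simple_graph_def)
    have "card ?U > 0" using A n_subsets[OF T] by simp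
    then have U: "finite ?U" "?U \<noteq> {}" by (simp_all add: card_gt_0_iff)
    show ?thesis
      using prob_pmf_of_set_Ball_ge[OF U V card_k_subsets_violating_le[OF V c TV kT T0 L]] A False
      by (simp add: f_def)
  qed
qed

end
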